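(* Let $\delta,\alpha\geq0$, $\theta\in[0,\alpha]$, $\sigma\in\mathbb{R}$, $\varepsilon\in(0,1)$, and let $E_1(t,\xi)=\frac12|\xi|^{2\delta+\sigma}|\widehat{v}_t(t,\xi)|^2+\frac12|\xi|^{2\alpha+\sigma}|\widehat{v}(t,\xi)|^2$. (i) If $(v_0,v_1)\in H^{\alpha+\frac\sigma2}(\mathbb{R}^n)\times H^{\delta+\frac\sigma2}(\mathbb{R}^n)$ and $\delta\leq\theta\leq\alpha$, then there is a constant $c>0$ such that $$\int_{|\xi|\geq\varepsilon}E_1(t,\xi)\,d\xi\lesssim\left\{\|v_1\|^2_{H^{\delta+\frac\sigma2}}+\|v_0\|^2_{H^{\alpha+\frac\sigma2}}\right\}e^{-ct},\quad\forall t\geq0.$$ (ii) If $(v_0,v_1)\in H^s(\mathbb{R}^n)\times H^r(\mathbb{R}^n)$, $\beta>0$ and $\theta<\delta$, with $s=\alpha+\frac{\delta-\theta}{\beta}+\frac\sigma2$ and $r=\delta+\frac{\delta-\theta}{\beta}+\frac\sigma2$, then there is $C=C(\beta)>0$ such that $$\int_{|\xi|\geq\varepsilon}E_1(t,\xi)\,d\xi\leq C\left\{\|v_1\|^2_{H^r}+\|v_0\|^2_{H^s}\right\}(1+t)^{-\frac1\beta},\quad\forall t\geq0.$$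
   Context: $\widehat{v}(t,\xi)$ is the solution of $(1+|\xi|^{2\delta})\widehat{v}_{tt}+|\xi|^{2\theta}\widehat{v}_t+|\xi|^{2\alpha}\widehat{v}=0$, $\widehat{v}(0)=\widehat{v}_0$, $\widehat{v}_t(0)=\widehat{v}_1$, the Fourier transform in $x$ of the solution of $v_{tt}+(-\Delta)^\delta v_{tt}+(-\Delta)^\alpha v+(-\Delta)^\theta v_t=0$, $v(0)=v_0$, $v_t(0)=v_1$. $\lesssim$ means $\leq C\cdot$ with $C$ independent of $t$ and data. *)

theory Defs
  imports "HOL-Analysis.Analysis"
begin

text \<open>Everything is stated on the Fourier side.  A tempered distribution u lies in
  H^s(R^n) iff its Fourier transform is a measurable function f with
  \<integral> (1+|xi|^2)^s |f(xi)|^2 dxi < \<infinity>; this integral is the squared H^s norm.\<close>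

definition sob_norm2 :: "real \<Rightarrow> (real^'n \<Rightarrow> complex) \<Rightarrow> ennreal" where
  "sob_norm2 s f = (\<integral>\<^sup>+ \<xi>. ennreal ((1 + (norm \<xi>)\<^sup>2) powr s * (cmod (f \<xi>))\<^sup>2) \<partial>lborel)"

definition in_H :: "real \<Rightarrow> (real^'n \<Rightarrow> complex) \<Rightarrow> bool" where
  "in_H s f \<longleftrightarrow> f \<in> borel_measurable lborel \<and> sob_norm2 s f < \<infinity>"

text \<open>w t xi = hat v(t,xi), w' t xi = hat v_t(t,xi): for every frequency xi \<noteq> 0,
  the function t \<mapsto> w t xi solves
  (1+|xi|^(2 delta)) w'' + |xi|^(2 theta) w' + |xi|^(2 alpha) w = 0 on [0,\<infinity>)
  with w 0 xi = hat v0 xi and w' 0 xi = hat v1 xi.\<close>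

definition is_fourier_sol ::
  "real \<Rightarrow> real \<Rightarrow> real \<Rightarrow> (real^'n \<Rightarrow> complex) \<Rightarrow> (real^'n \<Rightarrow> complex)
     \<Rightarrow> (real \<Rightarrow> real^'n \<Rightarrow> complex) \<Rightarrow> (real \<Rightarrow> real^'n \<Rightarrow> complex) \<Rightarrow> bool" where
  "is_fourier_sol \<delta> \<alpha> \<theta> v0 v1 w w' \<longleftrightarrow>
     (\<forall>\<xi>. \<xi> \<noteq> 0 \<longrightarrow>
        w 0 \<xi> = v0 \<xi> \<and> w' 0 \<xi> = v1 \<xi> \<and>
        (\<forall>t\<ge>0. ((\<lambda>\<tau>. w \<tau> \<xi>) has_vector_derivative w' t \<xi>) (at t within {0..}) \<and>
           (\<exists>w''. ((\<lambda>\<tau>. w' \<tau> \<xi>) has_vector_derivative w'') (at t within {0..}) \<and>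
              complex_of_real (1 + norm \<xi> powr (2*\<delta>)) * w''
              + complex_of_real (norm \<xi> powr (2*\<theta>)) * w' t \<xi>
              + complex_of_real (norm \<xi> powr (2*\<alpha>)) * w t \<xi> = 0)))"

definition E1 :: "real \<Rightarrow> real \<Rightarrow> real \<Rightarrow> (real \<Rightarrow> real^'n \<Rightarrow> complex)
     \<Rightarrow> (real \<Rightarrow> real^'n \<Rightarrow> complex) \<Rightarrow> real \<Rightarrow> real^'n \<Rightarrow> real" where
  "E1 \<delta> \<alpha> \<sigma> w w' t \<xi> =
     1/2 * norm \<xi> powr (2*\<delta> + \<sigma>) * (cmod (w' t \<xi>))\<^sup>2
     + 1/2 * norm \<xi> powr (2*\<alpha> + \<sigma>) * (cmod (w t \<xi>))\<^sup>2"

definition high_freq_energy :: "real \<Rightarrow> real \<Rightarrow> real \<Rightarrow> real \<Rightarrow> (real \<Rightarrow> real^'n \<Rightarrow> complex)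
     \<Rightarrow> (real \<Rightarrow> real^'n \<Rightarrow> complex) \<Rightarrow> real \<Rightarrow> ennreal" where
  "high_freq_energy \<delta> \<alpha> \<sigma> \<epsilon> w w' t =
     (\<integral>\<^sup>+ \<xi>. indicator {\<xi>. norm \<xi> \<ge> \<epsilon>} \<xi> * ennreal (E1 \<delta> \<alpha> \<sigma> w w' t \<xi>) \<partial>lborel)"

end

theory Submission
  imports Defs
begin

(* For each frequency \<xi> \<noteq> 0 the equation is a damped oscillator a w'' + b w' + k w = 0 with
   a = 1 + |\<xi>|^(2\<delta>), b = |\<xi>|^(2\<theta>), k = |\<xi>|^(2\<alpha>).  With g = min (b/a) (k/(3b)) the
   Lyapunov function L = E + g (a w' w + b w^2/2) is comparable to the energy E = a |w'|^2 + k |w|^2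
   and satisfies L' \<le> -(2/3) g L, so E(t) \<le> 3 E(0) exp (-(2/3) g t).  For |\<xi>| \<ge> \<epsilon> the rate g is
   bounded below by a constant when \<delta> \<le> \<theta>, which gives exponential decay; when \<theta> < \<delta> it is only
   bounded below by a multiple of m = (1 + |\<xi>|^2)^(\<theta> - \<delta>), and exp (-c m t) \<lesssim> (m (1 + t))^(-1/\<beta>)
   trades the missing decay for (\<delta> - \<theta>)/\<beta> extra derivatives on the data.  Comparing the weights
   |\<xi>|^\<sigma> a and |\<xi>|^\<sigma> k with powers of 1 + |\<xi>|^2 on |\<xi>| \<ge> \<epsilon> and integrating yields the
   Sobolev norms. *)

lemma DERIV_nonpos_imp_le_atLeast:
  fixes G :: "real \<Rightarrow> real"
  assumes "a \<le> t"
    and deriv: "\<And>s. a \<le> s \<Longrightarrow> \<exists>y. (G has_real_derivative y) (at s within {a..}) \<and> y \<le> 0"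
  shows "G t \<le> G a"
proof (rule DERIV_nonpos_imp_decreasing_open[OF \<open>a \<le> t\<close>])
  fix x assume x: "a < x" "x < t"
  have "at x within {a..} = at x"
    using x by (intro at_within_interior) (simp add: interior_real_atLeast)
  then show "\<exists>y. (G has_real_derivative y) (at x) \<and> y \<le> 0"
    using deriv[of x] x by auto
next
  show "continuous_on {a..t} G"
    unfolding continuous_on_eq_continuous_within
  proof
    fix x assume "x \<in> {a..t}"
    then obtain y where "(G has_real_derivative y) (at x within {a..})" using deriv[of x] by auto
    then have "continuous (at x within {a..}) G" by (rule DERIV_continuous)
    then show "continuous (at x within {a..t}) G" by (rule continuous_within_subset) auto
  qed
qed

lemma lyapunov_energy_equivalent:
  fixes a b k g u v :: real
  assumes "a > 0" "b > 0" "g \<ge> 0" "g * a \<le> b" "3 * g * b \<le> k"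
  defines "E \<equiv> a * u\<^sup>2 + k * v\<^sup>2"
  shows "E / 2 \<le> E + g * (a * u * v + b/2 * v\<^sup>2) \<and> E + g * (a * u * v + b/2 * v\<^sup>2) \<le> 3/2 * E"
proof -
  define A where "A = a * u\<^sup>2"
  define P where "P = g * a * \<bar>u * v\<bar>"
  define Q where "Q = g * b * v\<^sup>2"
  define X where "X = g * (a * u * v + b/2 * v\<^sup>2)"
  have "P \<le> A / 4 + Q"
  proof -
    have "0 \<le> a * (\<bar>u\<bar> / 2 - g * \<bar>v\<bar>)\<^sup>2" using assms by simp
    then have "P \<le> A / 4 + g * (g * a) * v\<^sup>2"
      unfolding P_def A_def by (simp add: power2_eq_square algebra_simps abs_mult)
    also have "g * (g * a) * v\<^sup>2 \<le> Q"
      unfolding Q_def using assms by (simp add: mult_left_mono mult_right_mono)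
    finally show ?thesis by simp
  qed
  moreover have "3 * Q \<le> k * v\<^sup>2"
    using mult_right_mono[OF assms(5), of "v\<^sup>2"] unfolding Q_def by (simp add: mult.assoc)
  moreover have "\<bar>X\<bar> \<le> P + Q / 2"
  proof -
    have "\<bar>X\<bar> = \<bar>g * a * (u * v) + g * b * v\<^sup>2 / 2\<bar>"
      unfolding X_def by (simp add: algebra_simps)
    also have "\<dots> \<le> \<bar>g * a * (u * v)\<bar> + \<bar>g * b * v\<^sup>2 / 2\<bar>"
      by (rule abs_triangle_ineq)
    finally show ?thesis unfolding P_def Q_def using assms by (simp add: abs_mult)
  qed
  moreover have "0 \<le> A" unfolding A_def using assms by simp
  ultimately have "\<bar>X\<bar> \<le> E / 2" unfolding E_def A_def[symmetric] by argo
  then show ?thesis unfolding X_def by linarith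
qed

lemma damped_oscillator_energy_decay:
  fixes x x' :: "real \<Rightarrow> real" and a b k t :: real
  assumes a: "a > 0" and b: "b > 0" and k: "k > 0" and t: "t \<ge> 0"
    and sol: "\<And>s. s \<ge> 0 \<Longrightarrow> (x has_real_derivative x' s) (at s within {0..}) \<and>
      (\<exists>x''. (x' has_real_derivative x'') (at s within {0..}) \<and> a * x'' + b * x' s + k * x s = 0)"
  shows "a * (x' t)\<^sup>2 + k * (x t)\<^sup>2
    \<le> 3 * (a * (x' 0)\<^sup>2 + k * (x 0)\<^sup>2) * exp (- (2/3 * min (b/a) (k/(3*b))) * t)"
proof -
  define g where "g = min (b/a) (k/(3*b))"
  have g: "g > 0" "g * a \<le> b" "3 * g * b \<le> k"
    using a b k by (auto simp: g_def field_simps min_def)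
  define E where "E s = a * (x' s)\<^sup>2 + k * (x s)\<^sup>2" for s
  define L where "L s = E s + g * (a * x' s * x s + b/2 * (x s)\<^sup>2)" for s
  have L_E: "E s / 2 \<le> L s \<and> L s \<le> 3/2 * E s" for s
    using lyapunov_energy_equivalent[OF a b less_imp_le[OF g(1)] g(2,3)] unfolding L_def E_def by blast
  have "L t * exp (2/3 * g * t) \<le> L 0 * exp (2/3 * g * 0)"
  proof (rule DERIV_nonpos_imp_le_atLeast[OF t])
    fix s :: real assume "0 \<le> s"
    with sol obtain x'' where dx: "(x has_real_derivative x' s) (at s within {0..})"
      and dx': "(x' has_real_derivative x'') (at s within {0..})"
      and eq: "a * x'' + b * x' s + k * x s = 0" by blast
    define L' where "L' = 2*a*x' s*x'' + 2*k*x s*x' s + g*(a*x''*x s + a*x' s*x' s + b*x s*x' s)"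
    have dL: "(L has_real_derivative L') (at s within {0..})"
      unfolding L_def[abs_def] E_def L'_def
      by (auto intro!: derivative_eq_intros dx dx' simp: power2_eq_square algebra_simps)
    have "L' - (-2*b*(x' s)\<^sup>2 + g*a*(x' s)\<^sup>2 - g*k*(x s)\<^sup>2) = (2*x' s + g*x s)*(a*x''+b*x' s+k*x s)"
      unfolding L'_def by (simp add: algebra_simps power2_eq_square)
    then have "L' = -2*b*(x' s)\<^sup>2 + g*a*(x' s)\<^sup>2 - g*k*(x s)\<^sup>2" using eq by simp
    also have "\<dots> \<le> - g * E s"
      using mult_right_mono[OF g(2), of "(x' s)\<^sup>2"] b unfolding E_def
      by (simp add: algebra_simps)
    finally have "L' \<le> - g * E s" .
    moreover have "2/3 * g * L s \<le> g * E s"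
      using mult_left_mono[OF L_E[of s, THEN conjunct2], of "2/3 * g"] g(1) by simp
    ultimately have "L' + 2/3 * g * L s \<le> 0" by linarith
    then have "exp (2/3 * g * s) * (L' + 2/3 * g * L s) \<le> 0"
      by (simp add: mult_nonneg_nonpos)
    moreover have "((\<lambda>s. L s * exp (2/3 * g * s)) has_real_derivative
        exp (2/3 * g * s) * (L' + 2/3 * g * L s)) (at s within {0..})"
      by (auto intro!: derivative_eq_intros dL simp: algebra_simps)
    ultimately show "\<exists>y. ((\<lambda>s. L s * exp (2/3 * g * s)) has_real_derivative y) (at s within {0..}) \<and> y \<le> 0"
      by blast
  qed
  then have "L t \<le> L 0 * exp (- (2/3 * g) * t)"
    by (simp add: exp_minus field_simps)
  also have "\<dots> \<le> 3/2 * E 0 * exp (- (2/3 * g) * t)"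
    using L_E[of 0, THEN conjunct2] by (rule mult_right_mono) simp
  finally have "E t \<le> 3 * E 0 * exp (- (2/3 * g) * t)"
    using L_E[of t] by linarith
  then show ?thesis unfolding E_def g_def .
qed

lemma damped_oscillator_energy_decay_complex:
  fixes z z' :: "real \<Rightarrow> complex" and a b k t :: real
  assumes a: "a > 0" and b: "b > 0" and k: "k > 0" and t: "t \<ge> 0"
    and sol: "\<And>s. s \<ge> 0 \<Longrightarrow> (z has_vector_derivative z' s) (at s within {0..}) \<and>
      (\<exists>z''. (z' has_vector_derivative z'') (at s within {0..}) \<and>
         complex_of_real a * z'' + complex_of_real b * z' s + complex_of_real k * z s = 0)"
  shows "a * (cmod (z' t))\<^sup>2 + k * (cmod (z t))\<^sup>2
    \<le> 3 * (a * (cmod (z' 0))\<^sup>2 + k * (cmod (z 0))\<^sup>2) * exp (- (2/3 * min (b/a) (k/(3*b))) * t)"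
proof -
  let ?e = "exp (- (2/3 * min (b/a) (k/(3*b))) * t)"
  have part: "a * (f (z' t))\<^sup>2 + k * (f (z t))\<^sup>2 \<le> 3 * (a * (f (z' 0))\<^sup>2 + k * (f (z 0))\<^sup>2) * ?e"
    if f: "f = Re \<or> f = Im" for f
  proof (rule damped_oscillator_energy_decay[OF a b k t])
    fix s :: real assume "s \<ge> 0"
    with sol obtain z'' where dz: "(z has_vector_derivative z' s) (at s within {0..})"
      and dz': "(z' has_vector_derivative z'') (at s within {0..})"
      and eq: "complex_of_real a * z'' + complex_of_real b * z' s + complex_of_real k * z s = 0" by blast
    have "a * f z'' + b * f (z' s) + k * f (z s) = 0"
      using f arg_cong[OF eq, of Re] arg_cong[OF eq, of Im] by auto
    moreover have "((\<lambda>s. f (z s)) has_real_derivative f (z' s)) (at s within {0..})"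
      "((\<lambda>s. f (z' s)) has_real_derivative f z'') (at s within {0..})"
      using f has_field_derivative_Re[OF dz] has_field_derivative_Re[OF dz']
        has_field_derivative_Im[OF dz] has_field_derivative_Im[OF dz'] by auto
    ultimately show "((\<lambda>s. f (z s)) has_real_derivative f (z' s)) (at s within {0..}) \<and>
      (\<exists>x''. ((\<lambda>s. f (z' s)) has_real_derivative x'') (at s within {0..}) \<and>
         a * x'' + b * f (z' s) + k * f (z s) = 0)"
      by blast
  qed
  have "a * (cmod (z' t))\<^sup>2 + k * (cmod (z t))\<^sup>2
      = (a * (Re (z' t))\<^sup>2 + k * (Re (z t))\<^sup>2) + (a * (Im (z' t))\<^sup>2 + k * (Im (z t))\<^sup>2)"
    by (simp add: cmod_power2 algebra_simps)
  also have "\<dots> \<le> 3 * (a * (Re (z' 0))\<^sup>2 + k * (Re (z 0))\<^sup>2) * ?e + 3 * (a * (Im (z' 0))\<^sup>2 + k * (Im (z 0))\<^sup>2) * ?e"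
    using part[of Re] part[of Im] by simp
  also have "\<dots> = 3 * (a * (cmod (z' 0))\<^sup>2 + k * (cmod (z 0))\<^sup>2) * ?e"
    by (simp add: cmod_power2 algebra_simps)
  finally show ?thesis .
qed

definition decay_rate :: "real \<Rightarrow> real \<Rightarrow> real \<Rightarrow> real \<Rightarrow> real" where
  "decay_rate \<delta> \<alpha> \<theta> \<rho> = min (\<rho> powr (2*\<theta>) / (1 + \<rho> powr (2*\<delta>))) (\<rho> powr (2*\<alpha>) / (3 * \<rho> powr (2*\<theta>)))"

lemma E1_le_initial_energy:
  fixes w w' :: "real \<Rightarrow> real^'n \<Rightarrow> complex"
  assumes sol: "is_fourier_sol \<delta> \<alpha> \<theta> v0 v1 w w'" and "\<xi> \<noteq> 0" and t: "t \<ge> 0"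
  shows "E1 \<delta> \<alpha> \<sigma> w w' t \<xi> \<le> 3/2 * norm \<xi> powr \<sigma> *
     ((1 + norm \<xi> powr (2*\<delta>)) * (cmod (v1 \<xi>))\<^sup>2 + norm \<xi> powr (2*\<alpha>) * (cmod (v0 \<xi>))\<^sup>2) *
     exp (- (2/3 * decay_rate \<delta> \<alpha> \<theta> (norm \<xi>)) * t)"
proof -
  define \<rho> where "\<rho> = norm \<xi>"
  have \<rho>: "\<rho> > 0" using \<open>\<xi> \<noteq> 0\<close> by (simp add: \<rho>_def)
  define a where "a = 1 + \<rho> powr (2*\<delta>)"
  define b where "b = \<rho> powr (2*\<theta>)"
  define k where "k = \<rho> powr (2*\<alpha>)"
  have a: "a > 0" unfolding a_def by (simp add: add_pos_nonneg)
  have b: "b > 0" and k: "k > 0" unfolding b_def k_def using \<rho> by simp_all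
  have rate: "decay_rate \<delta> \<alpha> \<theta> \<rho> = min (b/a) (k/(3*b))"
    unfolding decay_rate_def a_def b_def k_def ..
  from sol \<open>\<xi> \<noteq> 0\<close> have init: "w 0 \<xi> = v0 \<xi>" "w' 0 \<xi> = v1 \<xi>"
    and ode: "\<And>s. s \<ge> 0 \<Longrightarrow> ((\<lambda>\<tau>. w \<tau> \<xi>) has_vector_derivative w' s \<xi>) (at s within {0..}) \<and>
           (\<exists>w''. ((\<lambda>\<tau>. w' \<tau> \<xi>) has_vector_derivative w'') (at s within {0..}) \<and>
              complex_of_real a * w'' + complex_of_real b * w' s \<xi> + complex_of_real k * w s \<xi> = 0)"
    unfolding is_fourier_sol_def a_def b_def k_def \<rho>_def by blast+
  have decay: "a * (cmod (w' t \<xi>))\<^sup>2 + k * (cmod (w t \<xi>))\<^sup>2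
      \<le> 3 * (a * (cmod (v1 \<xi>))\<^sup>2 + k * (cmod (v0 \<xi>))\<^sup>2) * exp (- (2/3 * decay_rate \<delta> \<alpha> \<theta> \<rho>) * t)"
    using damped_oscillator_energy_decay_complex[OF a b k t ode] init rate by simp
  have "E1 \<delta> \<alpha> \<sigma> w w' t \<xi> = 1/2 * \<rho> powr \<sigma> * (\<rho> powr (2*\<delta>) * (cmod (w' t \<xi>))\<^sup>2 + k * (cmod (w t \<xi>))\<^sup>2)"
    unfolding E1_def k_def \<rho>_def[symmetric] using \<rho> by (simp add: powr_add algebra_simps)
  also have "\<dots> \<le> 1/2 * \<rho> powr \<sigma> * (a * (cmod (w' t \<xi>))\<^sup>2 + k * (cmod (w t \<xi>))\<^sup>2)"
    by (intro mult_left_mono add_right_mono mult_right_mono) (auto simp: a_def)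
  also have "\<dots> \<le> 1/2 * \<rho> powr \<sigma> * (3 * (a * (cmod (v1 \<xi>))\<^sup>2 + k * (cmod (v0 \<xi>))\<^sup>2) * exp (- (2/3 * decay_rate \<delta> \<alpha> \<theta> \<rho>) * t))"
    by (intro mult_left_mono decay) auto
  finally show ?thesis unfolding a_def k_def \<rho>_def by (simp add: algebra_simps)
qed

lemma powr_double_eq_sq_powr:
  fixes \<rho> :: real assumes "\<rho> > 0" shows "\<rho> powr (2 * q) = (\<rho>\<^sup>2) powr q"
  using assms by (simp add: powr_powr[symmetric] powr_numeral)

lemma sq_ge_bracket:
  fixes \<epsilon> \<rho> :: real
  assumes "0 < \<epsilon>" "\<epsilon> < 1" "\<epsilon> \<le> \<rho>"
  shows "\<epsilon>\<^sup>2/2 * (1 + \<rho>\<^sup>2) \<le> \<rho>\<^sup>2"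
proof -
  have "\<epsilon>\<^sup>2 \<le> \<rho>\<^sup>2" using assms by (intro power_mono) auto
  moreover have "\<epsilon>\<^sup>2 * \<rho>\<^sup>2 \<le> 1 * \<rho>\<^sup>2" using assms by (intro mult_right_mono) (auto simp: power_le_one)
  ultimately show ?thesis by (simp add: algebra_simps)
qed

lemma powr_double_le_bracket_powr:
  fixes \<rho> :: real
  assumes "\<rho> > 0" "p \<ge> 0"
  shows "\<rho> powr (2*p) \<le> (1 + \<rho>\<^sup>2) powr p"
  unfolding powr_double_eq_sq_powr[OF \<open>\<rho> > 0\<close>] using assms by (intro powr_mono2) auto

lemma powr_double_ge_bracket_powr:
  fixes \<epsilon> \<rho> :: real
  assumes "0 < \<epsilon>" "\<epsilon> < 1" "\<epsilon> \<le> \<rho>" "p \<ge> 0"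
  shows "(\<epsilon>\<^sup>2/2) powr p * (1 + \<rho>\<^sup>2) powr p \<le> \<rho> powr (2*p)"
proof -
  have "(\<epsilon>\<^sup>2/2 * (1 + \<rho>\<^sup>2)) powr p \<le> (\<rho>\<^sup>2) powr p"
    using sq_ge_bracket[OF assms(1-3)] assms by (intro powr_mono2) auto
  moreover have "(\<epsilon>\<^sup>2/2 * (1 + \<rho>\<^sup>2)) powr p = (\<epsilon>\<^sup>2/2) powr p * (1 + \<rho>\<^sup>2) powr p"
    using powr_mult[of "\<epsilon>\<^sup>2/2" "1 + \<rho>\<^sup>2" p] by simp
  ultimately show ?thesis
    using assms by (simp add: powr_double_eq_sq_powr)
qed

lemma powr_double_le_const_bracket_powr:
  fixes \<epsilon> \<rho> :: real
  assumes "0 < \<epsilon>" "\<epsilon> < 1" "\<epsilon> \<le> \<rho>"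
  shows "\<rho> powr (2*p) \<le> max 1 ((\<epsilon>\<^sup>2/2) powr p) * (1 + \<rho>\<^sup>2) powr p"
proof (cases "p \<ge> 0")
  case True
  then have "\<rho> powr (2*p) \<le> 1 * (1 + \<rho>\<^sup>2) powr p"
    using powr_double_le_bracket_powr[of \<rho> p] assms by simp
  then show ?thesis by (meson max.cobounded1 mult_right_mono order_trans powr_ge_zero)
next
  case False
  have "\<rho> powr (2*p) = (\<rho>\<^sup>2) powr p" using assms by (simp add: powr_double_eq_sq_powr)
  also have "\<dots> \<le> (\<epsilon>\<^sup>2/2 * (1 + \<rho>\<^sup>2)) powr p"
    using sq_ge_bracket[OF assms] assms False
    by (intro powr_mono2') (auto intro!: mult_pos_pos add_pos_nonneg)
  also have "\<dots> = (\<epsilon>\<^sup>2/2) powr p * (1 + \<rho>\<^sup>2) powr p"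
    using powr_mult[of "\<epsilon>\<^sup>2/2" "1 + \<rho>\<^sup>2" p] by simp
  also have "\<dots> \<le> max 1 ((\<epsilon>\<^sup>2/2) powr p) * (1 + \<rho>\<^sup>2) powr p"
    by (intro mult_right_mono) auto
  finally show ?thesis .
qed

lemma energy_weights_le_bracket:
  fixes \<epsilon> :: real
  assumes "0 < \<epsilon>" "\<epsilon> < 1" "0 \<le> \<delta>"
  obtains K where "K > 0"
    and "\<And>\<rho>. \<epsilon> \<le> \<rho> \<Longrightarrow> \<rho> powr \<sigma> * (1 + \<rho> powr (2*\<delta>)) \<le> K * (1 + \<rho>\<^sup>2) powr (\<delta> + \<sigma>/2)"
    and "\<And>\<rho>. \<epsilon> \<le> \<rho> \<Longrightarrow> \<rho> powr \<sigma> * \<rho> powr (2*\<alpha>) \<le> K * (1 + \<rho>\<^sup>2) powr (\<alpha> + \<sigma>/2)"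
proof -
  define K1 where "K1 = max 1 ((\<epsilon>\<^sup>2/2) powr (\<sigma>/2))"
  define K2 where "K2 = max 1 ((\<epsilon>\<^sup>2/2) powr (\<alpha> + \<sigma>/2))"
  show thesis
  proof (rule that[of "max (2 * K1) K2"])
    show "max (2 * K1) K2 > 0" by (simp add: K1_def less_max_iff_disj)
  next
    fix \<rho> assume "\<epsilon> \<le> \<rho>"
    then have \<rho>: "\<rho> > 0" using assms by simp
    have "\<rho> powr \<sigma> = \<rho> powr (2 * (\<sigma>/2))" by simp
    also have "\<dots> \<le> K1 * (1 + \<rho>\<^sup>2) powr (\<sigma>/2)"
      unfolding K1_def using powr_double_le_const_bracket_powr assms \<open>\<epsilon> \<le> \<rho>\<close> by blast
    finally have \<sigma>: "\<rho> powr \<sigma> \<le> K1 * (1 + \<rho>\<^sup>2) powr (\<sigma>/2)" .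
    have "1 + \<rho> powr (2*\<delta>) \<le> 2 * (1 + \<rho>\<^sup>2) powr \<delta>"
      using powr_double_le_bracket_powr[OF \<rho> assms(3)] ge_one_powr_ge_zero[of "1 + \<rho>\<^sup>2" \<delta>] assms
      by simp
    with \<sigma> have "\<rho> powr \<sigma> * (1 + \<rho> powr (2*\<delta>)) \<le> K1 * (1 + \<rho>\<^sup>2) powr (\<sigma>/2) * (2 * (1 + \<rho>\<^sup>2) powr \<delta>)"
      by (intro mult_mono) (auto simp: K1_def)
    also have "\<dots> = 2 * K1 * (1 + \<rho>\<^sup>2) powr (\<delta> + \<sigma>/2)"
      by (simp add: powr_add)
    also have "\<dots> \<le> max (2 * K1) K2 * (1 + \<rho>\<^sup>2) powr (\<delta> + \<sigma>/2)"
      by (intro mult_right_mono) auto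
    finally show "\<rho> powr \<sigma> * (1 + \<rho> powr (2*\<delta>)) \<le> max (2 * K1) K2 * (1 + \<rho>\<^sup>2) powr (\<delta> + \<sigma>/2)" .
  next
    fix \<rho> assume "\<epsilon> \<le> \<rho>"
    have "\<rho> powr \<sigma> * \<rho> powr (2*\<alpha>) = \<rho> powr (2 * (\<alpha> + \<sigma>/2))"
      by (simp add: powr_add[symmetric] algebra_simps)
    also have "\<dots> \<le> K2 * (1 + \<rho>\<^sup>2) powr (\<alpha> + \<sigma>/2)"
      unfolding K2_def using powr_double_le_const_bracket_powr assms \<open>\<epsilon> \<le> \<rho>\<close> by blast
    also have "\<dots> \<le> max (2 * K1) K2 * (1 + \<rho>\<^sup>2) powr (\<alpha> + \<sigma>/2)"
      by (intro mult_right_mono) auto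
    finally show "\<rho> powr \<sigma> * \<rho> powr (2*\<alpha>) \<le> max (2 * K1) K2 * (1 + \<rho>\<^sup>2) powr (\<alpha> + \<sigma>/2)" .
  qed
qed

lemma stiffness_ratio_ge:
  fixes \<epsilon> \<rho> :: real
  assumes "0 < \<epsilon>" "\<epsilon> \<le> \<rho>" "\<theta> \<le> \<alpha>"
  shows "\<epsilon> powr (2*\<alpha> - 2*\<theta>) / 3 \<le> \<rho> powr (2*\<alpha>) / (3 * \<rho> powr (2*\<theta>))"
proof -
  have "\<epsilon> powr (2*\<alpha> - 2*\<theta>) \<le> \<rho> powr (2*\<alpha> - 2*\<theta>)" using assms by (intro powr_mono2) auto
  then show ?thesis using assms by (simp add: powr_diff)
qed

lemma decay_rate_ge_const:
  fixes \<epsilon> :: real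
  assumes "0 < \<epsilon>" "\<epsilon> < 1" "0 \<le> \<delta>" "\<delta> \<le> \<theta>" "\<theta> \<le> \<alpha>"
  obtains c where "c > 0" "\<And>\<rho>. \<epsilon> \<le> \<rho> \<Longrightarrow> c \<le> decay_rate \<delta> \<alpha> \<theta> \<rho>"
proof (rule that)
  show "min (\<epsilon> powr (2*\<theta>) / 2) (\<epsilon> powr (2*\<alpha> - 2*\<theta>) / 3) > 0" using assms by simp
  fix \<rho> :: real assume "\<epsilon> \<le> \<rho>"
  have "\<epsilon> powr (2*\<theta>) / 2 * (1 + \<rho> powr (2*\<delta>)) \<le> \<rho> powr (2*\<theta>)"
  proof (cases "\<rho> \<ge> 1")
    case True
    have "\<rho> powr (2*\<delta>) \<le> \<rho> powr (2*\<theta>)" using True assms by (intro powr_mono) auto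
    moreover have "1 \<le> \<rho> powr (2*\<theta>)" using True assms by (intro ge_one_powr_ge_zero) auto
    moreover have "\<epsilon> powr (2*\<theta>) \<le> 1" using powr_mono2[of "2*\<theta>" \<epsilon> 1] assms by simp
    moreover have "\<epsilon> powr (2*\<theta>) / 2 * (1 + \<rho> powr (2*\<delta>)) \<le> 1/2 * (1 + \<rho> powr (2*\<delta>))"
      using calculation(3) by (intro mult_right_mono) (auto intro: add_nonneg_nonneg)
    ultimately show ?thesis by argo
  next
    case False
    have "\<rho> powr (2*\<delta>) \<le> 1" using powr_mono2[of "2*\<delta>" \<rho> 1] False assms \<open>\<epsilon> \<le> \<rho>\<close> by simp
    then have "\<epsilon> powr (2*\<theta>) / 2 * (1 + \<rho> powr (2*\<delta>)) \<le> \<epsilon> powr (2*\<theta>) / 2 * 2"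
      by (intro mult_left_mono) auto
    also have "\<dots> \<le> \<rho> powr (2*\<theta>)" using assms \<open>\<epsilon> \<le> \<rho>\<close> by (simp add: powr_mono2)
    finally show ?thesis .
  qed
  then have "\<epsilon> powr (2*\<theta>) / 2 \<le> \<rho> powr (2*\<theta>) / (1 + \<rho> powr (2*\<delta>))"
    by (simp add: le_divide_eq add_pos_nonneg)
  moreover have "\<epsilon> powr (2*\<alpha> - 2*\<theta>) / 3 \<le> \<rho> powr (2*\<alpha>) / (3 * \<rho> powr (2*\<theta>))"
    using assms \<open>\<epsilon> \<le> \<rho>\<close> by (intro stiffness_ratio_ge) auto
  ultimately show "min (\<epsilon> powr (2*\<theta>) / 2) (\<epsilon> powr (2*\<alpha> - 2*\<theta>) / 3) \<le> decay_rate \<delta> \<alpha> \<theta> \<rho>"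
    unfolding decay_rate_def by (auto simp: min_def)
qed

lemma decay_rate_ge_bracket_powr:
  fixes \<epsilon> :: real
  assumes "0 < \<epsilon>" "\<epsilon> < 1" "0 \<le> \<theta>" "\<theta> \<le> \<delta>" "\<theta> \<le> \<alpha>"
  obtains c where "c > 0" "\<And>\<rho>. \<epsilon> \<le> \<rho> \<Longrightarrow> c * (1 + \<rho>\<^sup>2) powr (\<theta> - \<delta>) \<le> decay_rate \<delta> \<alpha> \<theta> \<rho>"
proof (rule that)
  define c1 where "c1 = (\<epsilon>\<^sup>2/2) powr \<theta> / 2"
  define c2 where "c2 = \<epsilon> powr (2*\<alpha> - 2*\<theta>) / 3"
  show "min c1 c2 > 0" unfolding c1_def c2_def using assms by simp
  fix \<rho> :: real assume "\<epsilon> \<le> \<rho>"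
  then have \<rho>: "\<rho> > 0" using assms by simp
  define P where "P = 1 + \<rho>\<^sup>2"
  have P: "P \<ge> 1" unfolding P_def by simp
  have m: "P powr (\<theta> - \<delta>) \<le> 1" using powr_mono[of "\<theta> - \<delta>" 0 P] P assms by simp
  have "1 + \<rho> powr (2*\<delta>) \<le> 2 * P powr \<delta>"
    using powr_double_le_bracket_powr[OF \<rho>, of \<delta>] ge_one_powr_ge_zero[OF P, of \<delta>] assms
    unfolding P_def by simp
  then have "c1 * P powr (\<theta> - \<delta>) * (1 + \<rho> powr (2*\<delta>)) \<le> c1 * P powr (\<theta> - \<delta>) * (2 * P powr \<delta>)"
    unfolding c1_def by (intro mult_left_mono) auto
  also have "\<dots> = (\<epsilon>\<^sup>2/2) powr \<theta> * P powr \<theta>"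
    unfolding c1_def using P by (simp add: powr_add[symmetric])
  also have "\<dots> \<le> \<rho> powr (2*\<theta>)"
    unfolding P_def using powr_double_ge_bracket_powr assms \<open>\<epsilon> \<le> \<rho>\<close> by blast
  finally have "c1 * P powr (\<theta> - \<delta>) \<le> \<rho> powr (2*\<theta>) / (1 + \<rho> powr (2*\<delta>))"
    by (simp add: le_divide_eq add_pos_nonneg)
  moreover have "c2 * P powr (\<theta> - \<delta>) \<le> c2"
    using mult_left_mono[OF m, of c2] unfolding c2_def by simp
  moreover have "c2 \<le> \<rho> powr (2*\<alpha>) / (3 * \<rho> powr (2*\<theta>))"
    unfolding c2_def using stiffness_ratio_ge assms \<open>\<epsilon> \<le> \<rho>\<close> by blast
  moreover have "min c1 c2 * P powr (\<theta> - \<delta>) \<le> c1 * P powr (\<theta> - \<delta>)"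
    "min c1 c2 * P powr (\<theta> - \<delta>) \<le> c2 * P powr (\<theta> - \<delta>)"
    by (simp_all add: mult_right_mono)
  ultimately show "min c1 c2 * (1 + \<rho>\<^sup>2) powr (\<theta> - \<delta>) \<le> decay_rate \<delta> \<alpha> \<theta> \<rho>"
    unfolding decay_rate_def P_def[symmetric] by simp
qed

lemma exp_neg_le_powr:
  fixes y p :: real
  assumes y: "y \<ge> 0" and p: "p > 0"
  shows "exp (- y) \<le> max 1 p powr p * (1 + y) powr (- p)"
proof -
  define M where "M = max 1 p"
  have M: "M \<ge> 1" unfolding M_def by simp
  have "1 + y \<le> M * (1 + y / p)"
  proof (cases "p \<ge> 1")
    case True
    then show ?thesis unfolding M_def using p y by (simp add: field_simps)
  next
    case False
    then have "y \<le> y / p" using y p by (simp add: le_divide_eq mult_left_le)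
    then show ?thesis using False unfolding M_def by simp
  qed
  then have "(1 + y) powr p \<le> (M * (1 + y / p)) powr p" using y p by (intro powr_mono2) auto
  also have "\<dots> = M powr p * (1 + y / p) powr p" using M y p by (simp add: powr_mult)
  also have "\<dots> \<le> M powr p * exp (y / p) powr p"
    using y p by (intro mult_left_mono powr_mono2) (auto simp: exp_ge_add_one_self)
  also have "exp (y / p) powr p = exp y" using p by (simp add: powr_def)
  finally have "(1 + y) powr p \<le> M powr p * exp y" .
  then show ?thesis
    using y by (simp add: exp_minus powr_minus field_simps M_def)
qed

lemma exp_neg_mult_le_powr:
  fixes c m t p :: real
  assumes "c > 0" "0 < m" "m \<le> 1" "t \<ge> 0" "p > 0"
  shows "exp (- (c * m * t)) \<le> max 1 p powr p * min c 1 powr (- p) * m powr (- p) * (1 + t) powr (- p)"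
proof -
  have "exp (- (c * m * t)) \<le> max 1 p powr p * (1 + c * m * t) powr (- p)"
    using assms by (intro exp_neg_le_powr) auto
  also have "\<dots> \<le> max 1 p powr p * (min c 1 * m * (1 + t)) powr (- p)"
  proof (intro mult_left_mono powr_mono2')
    have "min c 1 * m \<le> 1" using assms by (simp add: mult_le_one)
    moreover have "min c 1 * m * t \<le> c * m * t" using assms by (intro mult_right_mono) auto
    ultimately show "min c 1 * m * (1 + t) \<le> 1 + c * m * t" by (simp add: algebra_simps)
  qed (use assms in auto)
  also have "\<dots> = max 1 p powr p * min c 1 powr (- p) * m powr (- p) * (1 + t) powr (- p)"
    using assms by (simp add: powr_mult)
  finally show ?thesis .
qed

lemma high_freq_energy_le_sob_norm2:
  fixes w w' :: "real \<Rightarrow> real^'n \<Rightarrow> complex" and v0 v1 :: "real^'n \<Rightarrow> complex"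
  assumes "K \<ge> 0" "v0 \<in> borel_measurable lborel" "v1 \<in> borel_measurable lborel"
    and pointwise: "\<And>\<xi>. \<epsilon> \<le> norm \<xi> \<Longrightarrow> E1 \<delta> \<alpha> \<sigma> w w' t \<xi> \<le>
      K * ((1 + (norm \<xi>)\<^sup>2) powr r * (cmod (v1 \<xi>))\<^sup>2 + (1 + (norm \<xi>)\<^sup>2) powr s * (cmod (v0 \<xi>))\<^sup>2)"
  shows "high_freq_energy \<delta> \<alpha> \<sigma> \<epsilon> w w' t \<le> ennreal K * (sob_norm2 r v1 + sob_norm2 s v0)"
proof -
  define A where "A \<xi> = (1 + (norm \<xi>)\<^sup>2) powr r * (cmod (v1 \<xi>))\<^sup>2" for \<xi>
  define B where "B \<xi> = (1 + (norm \<xi>)\<^sup>2) powr s * (cmod (v0 \<xi>))\<^sup>2" for \<xi>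
  have [measurable]: "v0 \<in> borel_measurable lborel" "v1 \<in> borel_measurable lborel" using assms by auto
  have "high_freq_energy \<delta> \<alpha> \<sigma> \<epsilon> w w' t \<le> (\<integral>\<^sup>+ \<xi>. ennreal K * (ennreal (A \<xi>) + ennreal (B \<xi>)) \<partial>lborel)"
    unfolding high_freq_energy_def
  proof (rule nn_integral_mono)
    fix \<xi> :: "real^'n"
    have "\<epsilon> \<le> norm \<xi> \<Longrightarrow> ennreal (E1 \<delta> \<alpha> \<sigma> w w' t \<xi>) \<le> ennreal (K * (A \<xi> + B \<xi>))"
      using pointwise unfolding A_def B_def by (intro ennreal_leI) simp
    then show "indicator {\<xi>. \<epsilon> \<le> norm \<xi>} \<xi> * ennreal (E1 \<delta> \<alpha> \<sigma> w w' t \<xi>) \<le> ennreal K * (ennreal (A \<xi>) + ennreal (B \<xi>))"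
      using \<open>K \<ge> 0\<close> by (auto simp: A_def B_def ennreal_mult ennreal_plus indicator_def)
  qed
  also have "\<dots> = ennreal K * ((\<integral>\<^sup>+ \<xi>. ennreal (A \<xi>) \<partial>lborel) + (\<integral>\<^sup>+ \<xi>. ennreal (B \<xi>) \<partial>lborel))"
    unfolding A_def B_def by (simp add: nn_integral_cmult nn_integral_add)
  also have "\<dots> = ennreal K * (sob_norm2 r v1 + sob_norm2 s v0)"
    unfolding sob_norm2_def A_def B_def by simp
  finally show ?thesis .
qed

lemma high_freq_energy_le_of_decay_bound:
  fixes \<epsilon> :: real
  assumes "0 < \<epsilon>" "\<epsilon> < 1" "0 \<le> \<delta>"
  obtains K where "K > 0"
    and "\<And>(v0 :: real^'n \<Rightarrow> complex) v1 w w' t F q.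
      is_fourier_sol \<delta> \<alpha> \<theta> v0 v1 w w' \<Longrightarrow>
      v0 \<in> borel_measurable lborel \<Longrightarrow> v1 \<in> borel_measurable lborel \<Longrightarrow> t \<ge> 0 \<Longrightarrow> F \<ge> 0 \<Longrightarrow>
      (\<And>\<xi> :: real^'n. \<epsilon> \<le> norm \<xi> \<Longrightarrow>
         exp (- (2/3 * decay_rate \<delta> \<alpha> \<theta> (norm \<xi>)) * t) \<le> F * (1 + (norm \<xi>)\<^sup>2) powr q) \<Longrightarrow>
      high_freq_energy \<delta> \<alpha> \<sigma> \<epsilon> w w' t
        \<le> ennreal (K * F) * (sob_norm2 (\<delta> + q + \<sigma>/2) v1 + sob_norm2 (\<alpha> + q + \<sigma>/2) v0)"
proof -
  obtain Kw where Kw: "Kw > 0"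
    and W1: "\<And>\<rho>. \<epsilon> \<le> \<rho> \<Longrightarrow> \<rho> powr \<sigma> * (1 + \<rho> powr (2*\<delta>)) \<le> Kw * (1 + \<rho>\<^sup>2) powr (\<delta> + \<sigma>/2)"
    and W2: "\<And>\<rho>. \<epsilon> \<le> \<rho> \<Longrightarrow> \<rho> powr \<sigma> * \<rho> powr (2*\<alpha>) \<le> Kw * (1 + \<rho>\<^sup>2) powr (\<alpha> + \<sigma>/2)"
    using energy_weights_le_bracket[OF assms] by blast
  show thesis
  proof (rule that[of "3/2 * Kw"])
    show "3/2 * Kw > 0" using Kw by simp
    fix v0 v1 :: "real^'n \<Rightarrow> complex" and w w' t F q
    assume sol: "is_fourier_sol \<delta> \<alpha> \<theta> v0 v1 w w'"
      and meas: "v0 \<in> borel_measurable lborel" "v1 \<in> borel_measurable lborel"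
      and t: "t \<ge> 0" and F: "F \<ge> 0"
      and decay: "\<And>\<xi> :: real^'n. \<epsilon> \<le> norm \<xi> \<Longrightarrow>
         exp (- (2/3 * decay_rate \<delta> \<alpha> \<theta> (norm \<xi>)) * t) \<le> F * (1 + (norm \<xi>)\<^sup>2) powr q"
    show "high_freq_energy \<delta> \<alpha> \<sigma> \<epsilon> w w' t
        \<le> ennreal (3/2 * Kw * F) * (sob_norm2 (\<delta> + q + \<sigma>/2) v1 + sob_norm2 (\<alpha> + q + \<sigma>/2) v0)"
    proof (rule high_freq_energy_le_sob_norm2[OF _ meas])
      show "0 \<le> 3/2 * Kw * F" using Kw F by simp
      fix \<xi> :: "real^'n" assume \<xi>: "\<epsilon> \<le> norm \<xi>"
      define \<rho> where "\<rho> = norm \<xi>"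
      define P where "P = 1 + \<rho>\<^sup>2"
      have "\<xi> \<noteq> 0" using \<xi> assms by auto
      have weights: "\<rho> powr \<sigma> * (1 + \<rho> powr (2*\<delta>)) * (cmod (v1 \<xi>))\<^sup>2 + \<rho> powr \<sigma> * \<rho> powr (2*\<alpha>) * (cmod (v0 \<xi>))\<^sup>2
          \<le> Kw * P powr (\<delta> + \<sigma>/2) * (cmod (v1 \<xi>))\<^sup>2 + Kw * P powr (\<alpha> + \<sigma>/2) * (cmod (v0 \<xi>))\<^sup>2"
        using \<xi> unfolding \<rho>_def P_def by (intro add_mono mult_right_mono W1 W2) auto
      have "E1 \<delta> \<alpha> \<sigma> w w' t \<xi> \<le> 3/2 * (\<rho> powr \<sigma> * (1 + \<rho> powr (2*\<delta>)) * (cmod (v1 \<xi>))\<^sup>2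
          + \<rho> powr \<sigma> * \<rho> powr (2*\<alpha>) * (cmod (v0 \<xi>))\<^sup>2) * exp (- (2/3 * decay_rate \<delta> \<alpha> \<theta> \<rho>) * t)"
        using E1_le_initial_energy[OF sol \<open>\<xi> \<noteq> 0\<close> t, of \<sigma>] unfolding \<rho>_def by (simp add: algebra_simps)
      also have "\<dots> \<le> 3/2 * (Kw * P powr (\<delta> + \<sigma>/2) * (cmod (v1 \<xi>))\<^sup>2
          + Kw * P powr (\<alpha> + \<sigma>/2) * (cmod (v0 \<xi>))\<^sup>2) * (F * P powr q)"
        using weights decay[OF \<xi>] Kw unfolding \<rho>_def P_def
        by (intro mult_mono mult_left_mono) auto
      also have "\<dots> = 3/2 * Kw * F * (P powr (\<delta> + q + \<sigma>/2) * (cmod (v1 \<xi>))\<^sup>2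
          + P powr (\<alpha> + q + \<sigma>/2) * (cmod (v0 \<xi>))\<^sup>2)"
        by (simp add: powr_add algebra_simps)
      finally show "E1 \<delta> \<alpha> \<sigma> w w' t \<xi> \<le> 3/2 * Kw * F * ((1 + (norm \<xi>)\<^sup>2) powr (\<delta> + q + \<sigma>/2) * (cmod (v1 \<xi>))\<^sup>2
          + (1 + (norm \<xi>)\<^sup>2) powr (\<alpha> + q + \<sigma>/2) * (cmod (v0 \<xi>))\<^sup>2)"
        unfolding P_def \<rho>_def .
    qed
  qed
qed

lemma high_freq_energy_exp_decay:
  fixes \<delta> \<alpha> \<theta> \<sigma> \<epsilon> :: real
  assumes "0 < \<epsilon>" "\<epsilon> < 1" "0 \<le> \<delta>" "\<delta> \<le> \<theta>" "\<theta> \<le> \<alpha>"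
  shows "\<exists>c>0. \<exists>C>0. \<forall>(v0 :: real^'n \<Rightarrow> complex) v1 w w'.
    in_H (\<alpha> + \<sigma>/2) v0 \<and> in_H (\<delta> + \<sigma>/2) v1 \<and> is_fourier_sol \<delta> \<alpha> \<theta> v0 v1 w w' \<longrightarrow>
    (\<forall>t\<ge>0. high_freq_energy \<delta> \<alpha> \<sigma> \<epsilon> w w' t
       \<le> ennreal C * (sob_norm2 (\<delta> + \<sigma>/2) v1 + sob_norm2 (\<alpha> + \<sigma>/2) v0) * ennreal (exp (- c * t)))"
proof -
  obtain K where K: "K > 0" and energy: "\<And>(v0 :: real^'n \<Rightarrow> complex) v1 w w' t F q.
      is_fourier_sol \<delta> \<alpha> \<theta> v0 v1 w w' \<Longrightarrow>
      v0 \<in> borel_measurable lborel \<Longrightarrow> v1 \<in> borel_measurable lborel \<Longrightarrow> t \<ge> 0 \<Longrightarrow> F \<ge> 0 \<Longrightarrow>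
      (\<And>\<xi> :: real^'n. \<epsilon> \<le> norm \<xi> \<Longrightarrow>
         exp (- (2/3 * decay_rate \<delta> \<alpha> \<theta> (norm \<xi>)) * t) \<le> F * (1 + (norm \<xi>)\<^sup>2) powr q) \<Longrightarrow>
      high_freq_energy \<delta> \<alpha> \<sigma> \<epsilon> w w' t
        \<le> ennreal (K * F) * (sob_norm2 (\<delta> + q + \<sigma>/2) v1 + sob_norm2 (\<alpha> + q + \<sigma>/2) v0)"
    using high_freq_energy_le_of_decay_bound[OF assms(1-3)] by blast
  obtain c where c: "c > 0" and rate: "\<And>\<rho>. \<epsilon> \<le> \<rho> \<Longrightarrow> c \<le> decay_rate \<delta> \<alpha> \<theta> \<rho>"
    using decay_rate_ge_const[OF assms] by blast
  have "high_freq_energy \<delta> \<alpha> \<sigma> \<epsilon> w w' t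
      \<le> ennreal K * (sob_norm2 (\<delta> + \<sigma>/2) v1 + sob_norm2 (\<alpha> + \<sigma>/2) v0) * ennreal (exp (- (2/3 * c) * t))"
    if "in_H (\<alpha> + \<sigma>/2) v0" "in_H (\<delta> + \<sigma>/2) v1" "is_fourier_sol \<delta> \<alpha> \<theta> v0 v1 w w'" "t \<ge> 0"
    for v0 v1 :: "real^'n \<Rightarrow> complex" and w w' t
  proof -
    have "exp (- (2/3 * decay_rate \<delta> \<alpha> \<theta> (norm \<xi>)) * t) \<le> exp (- (2/3 * c) * t) * (1 + (norm \<xi>)\<^sup>2) powr 0"
      if "\<epsilon> \<le> norm \<xi>" for \<xi> :: "real^'n"
    proof -
      have "1 + (norm \<xi>)\<^sup>2 > 0" by (simp add: add_pos_nonneg)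
      then show ?thesis using rate[OF that] \<open>t \<ge> 0\<close> by (simp add: mult_right_mono)
    qed
    then have "high_freq_energy \<delta> \<alpha> \<sigma> \<epsilon> w w' t
        \<le> ennreal (K * exp (- (2/3 * c) * t)) * (sob_norm2 (\<delta> + 0 + \<sigma>/2) v1 + sob_norm2 (\<alpha> + 0 + \<sigma>/2) v0)"
      using that unfolding in_H_def by (intro energy) auto
    then show ?thesis using K by (simp add: ennreal_mult mult_ac)
  qed
  then show ?thesis using c K by (intro exI[of _ "2/3 * c"] exI[of _ K]) auto
qed

lemma high_freq_energy_poly_decay:
  fixes \<delta> \<alpha> \<theta> \<sigma> \<epsilon> \<beta> :: real
  assumes "0 < \<epsilon>" "\<epsilon> < 1" "0 \<le> \<theta>" "\<theta> \<le> \<delta>" "\<theta> \<le> \<alpha>" "\<beta> > 0"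
  defines "q \<equiv> (\<delta> - \<theta>) / \<beta>"
  shows "\<exists>C>0. \<forall>(v0 :: real^'n \<Rightarrow> complex) v1 w w'.
    in_H (\<alpha> + q + \<sigma>/2) v0 \<and> in_H (\<delta> + q + \<sigma>/2) v1 \<and> is_fourier_sol \<delta> \<alpha> \<theta> v0 v1 w w' \<longrightarrow>
    (\<forall>t\<ge>0. high_freq_energy \<delta> \<alpha> \<sigma> \<epsilon> w w' t
       \<le> ennreal C * (sob_norm2 (\<delta> + q + \<sigma>/2) v1 + sob_norm2 (\<alpha> + q + \<sigma>/2) v0)
         * ennreal ((1 + t) powr (- 1/\<beta>)))"
proof -
  have "0 \<le> \<delta>" using assms by linarith
  obtain K where K: "K > 0" and energy: "\<And>(v0 :: real^'n \<Rightarrow> complex) v1 w w' t F q'.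
      is_fourier_sol \<delta> \<alpha> \<theta> v0 v1 w w' \<Longrightarrow>
      v0 \<in> borel_measurable lborel \<Longrightarrow> v1 \<in> borel_measurable lborel \<Longrightarrow> t \<ge> 0 \<Longrightarrow> F \<ge> 0 \<Longrightarrow>
      (\<And>\<xi> :: real^'n. \<epsilon> \<le> norm \<xi> \<Longrightarrow>
         exp (- (2/3 * decay_rate \<delta> \<alpha> \<theta> (norm \<xi>)) * t) \<le> F * (1 + (norm \<xi>)\<^sup>2) powr q') \<Longrightarrow>
      high_freq_energy \<delta> \<alpha> \<sigma> \<epsilon> w w' t
        \<le> ennreal (K * F) * (sob_norm2 (\<delta> + q' + \<sigma>/2) v1 + sob_norm2 (\<alpha> + q' + \<sigma>/2) v0)"
    using high_freq_energy_le_of_decay_bound[OF assms(1,2) \<open>0 \<le> \<delta>\<close>] by blast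
  obtain c where c: "c > 0"
    and rate: "\<And>\<rho>. \<epsilon> \<le> \<rho> \<Longrightarrow> c * (1 + \<rho>\<^sup>2) powr (\<theta> - \<delta>) \<le> decay_rate \<delta> \<alpha> \<theta> \<rho>"
    using decay_rate_ge_bracket_powr[OF assms(1-5)] by blast
  define p where "p = 1 / \<beta>"
  define M where "M = max 1 p powr p * min (2/3 * c) 1 powr (- p)"
  have p: "p > 0" and M: "M > 0" using assms c by (simp_all add: p_def M_def)
  have "high_freq_energy \<delta> \<alpha> \<sigma> \<epsilon> w w' t
      \<le> ennreal (K * M) * (sob_norm2 (\<delta> + q + \<sigma>/2) v1 + sob_norm2 (\<alpha> + q + \<sigma>/2) v0)
        * ennreal ((1 + t) powr (- 1/\<beta>))"
    if "in_H (\<alpha> + q + \<sigma>/2) v0" "in_H (\<delta> + q + \<sigma>/2) v1" "is_fourier_sol \<delta> \<alpha> \<theta> v0 v1 w w'" "t \<ge> 0"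
    for v0 v1 :: "real^'n \<Rightarrow> complex" and w w' t
  proof -
    have "exp (- (2/3 * decay_rate \<delta> \<alpha> \<theta> (norm \<xi>)) * t) \<le> M * (1 + t) powr (- p) * (1 + (norm \<xi>)\<^sup>2) powr q"
      if "\<epsilon> \<le> norm \<xi>" for \<xi> :: "real^'n"
    proof -
      define P where "P = 1 + (norm \<xi>)\<^sup>2"
      define m where "m = P powr (\<theta> - \<delta>)"
      have P: "P \<ge> 1" unfolding P_def by simp
      have m: "0 < m" "m \<le> 1"
        using powr_mono[of "\<theta> - \<delta>" 0 P] P assms unfolding m_def by auto
      have "exp (- (2/3 * decay_rate \<delta> \<alpha> \<theta> (norm \<xi>)) * t) \<le> exp (- (2/3 * c * m * t))"
        using mult_right_mono[OF rate[OF that] \<open>t \<ge> 0\<close>] unfolding m_def P_def by (simp add: mult_ac)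
      also have "\<dots> \<le> M * m powr (- p) * (1 + t) powr (- p)"
        using exp_neg_mult_le_powr[of "2/3 * c" m t p] c m p \<open>t \<ge> 0\<close> unfolding M_def by simp
      also have "m powr (- p) = P powr q"
      proof -
        have "(\<theta> - \<delta>) * - p = q" unfolding p_def q_def using assms by (simp add: field_simps)
        then show ?thesis unfolding m_def powr_powr by simp
      qed
      finally show ?thesis unfolding P_def by (simp add: mult_ac)
    qed
    then have "high_freq_energy \<delta> \<alpha> \<sigma> \<epsilon> w w' t
        \<le> ennreal (K * (M * (1 + t) powr (- p))) * (sob_norm2 (\<delta> + q + \<sigma>/2) v1 + sob_norm2 (\<alpha> + q + \<sigma>/2) v0)"
      using that M unfolding in_H_def by (intro energy) auto
    then show ?thesis using K M unfolding p_def by (simp add: ennreal_mult mult_ac)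
  qed
  then show ?thesis using K M by (intro exI[of _ "K * M"]) auto
qed

theorem proposition3p1:
  fixes \<delta> \<alpha> \<theta> \<sigma> \<epsilon> :: real
  assumes "\<delta> \<ge> 0" and "\<alpha> \<ge> 0" and "0 \<le> \<theta>" and "\<theta> \<le> \<alpha>"
    and "0 < \<epsilon>" and "\<epsilon> < 1"
  shows
   "(\<delta> \<le> \<theta> \<longrightarrow>
      (\<exists>c>0. \<exists>C>0. \<forall>(v0 :: real^'n \<Rightarrow> complex) v1 w w'.
         in_H (\<alpha> + \<sigma>/2) v0 \<and> in_H (\<delta> + \<sigma>/2) v1 \<and> is_fourier_sol \<delta> \<alpha> \<theta> v0 v1 w w' \<longrightarrow>
         (\<forall>t\<ge>0. high_freq_energy \<delta> \<alpha> \<sigma> \<epsilon> w w' t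
            \<le> ennreal C * (sob_norm2 (\<delta> + \<sigma>/2) v1 + sob_norm2 (\<alpha> + \<sigma>/2) v0)
              * ennreal (exp (- c * t)))))
    \<and>
    (\<forall>\<beta>>0. \<theta> < \<delta> \<longrightarrow>
      (let s = \<alpha> + (\<delta> - \<theta>)/\<beta> + \<sigma>/2; r = \<delta> + (\<delta> - \<theta>)/\<beta> + \<sigma>/2 in
      (\<exists>C>0. \<forall>(v0 :: real^'n \<Rightarrow> complex) v1 w w'.
         in_H s v0 \<and> in_H r v1 \<and> is_fourier_sol \<delta> \<alpha> \<theta> v0 v1 w w' \<longrightarrow>
         (\<forall>t\<ge>0. high_freq_energy \<delta> \<alpha> \<sigma> \<epsilon> w w' t
            \<le> ennreal C * (sob_norm2 r v1 + sob_norm2 s v0)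
              * ennreal ((1 + t) powr (- 1/\<beta>))))))"
  using assms high_freq_energy_exp_decay[of \<epsilon> \<delta> \<theta> \<alpha> \<sigma>] high_freq_energy_poly_decay[of \<epsilon> \<theta> \<delta> \<alpha> _ \<sigma>]
  by (auto simp: Let_def)

end
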